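(* Let $G$ be a finite group acting transitively on a finite set $\mathsf X$, fix $x_0\in\mathsf X$, let $H=\{g\in G: gx_0=x_0\}$, and choose representatives $k_x\in G$ ($x\in\mathsf X$) with $k_xx_0=x$ and $k_{x_0}=e$. Let $\psi:H\times H\to U(1)$ be a 2-cocycle, i.e. $\psi(a,bc)\psi(b,c)=\psi(a,b)\psi(ab,c)$ for all $a,b,c\in H$. Define $L:G\times G\times\mathsf X\to U(1)$ by $$L^x_{g_1,g_2}=\psi(h_1,h_2),\qquad h_1=k_{g_1g_2x}^{-1}\,g_1\,k_{g_2x},\quad h_2=k_{g_2x}^{-1}\,g_2\,k_x\ (\in H).$$ Then $L$ is block independent if and only if $\psi$ extends to $G$, i.e. there exists a 2-cocycle $\Psi:G\times G\to\mathbb{C}^\times$ (equivalently, one with values in $U(1)$) whose restriction to $H\times H$ equals $\psi$.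
   Context: A gauge transformation is a pair of functions $\beta:G\times G\to\mathbb{C}^\times$, $\gamma:G\times\mathsf X\to\mathbb{C}^\times$ ($(g,x)\mapsto\gamma^x_g$); it maps $L$ to $L'^x_{g,h}=\dfrac{\beta_{g,h}\,\gamma^x_{gh}}{\gamma^{hx}_{g}\,\gamma^x_h}L^x_{g,h}$. For a family $L$ define $\ell^x_{a,b;g}=L^x_{ag,g^{-1}b}/L^x_{a,b}$. $L$ is called block independent if there is a gauge transformation such that the transformed quantities $\ell'^x_{a,b;g}$ are independent of $x\in\mathsf X$ for all $a,b,g\in G$. A 2-cocycle $\Psi:G\times G\to\mathbb{C}^\times$ satisfies $\Psi(a,bc)\Psi(b,c)=\Psi(a,b)\Psi(ab,c)$ for all $a,b,c\in G$. *)

theory Defs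
  imports "HOL-Analysis.Analysis" "HOL-Algebra.Group_Action"
begin

definition cocycle_on :: "('g, 'm) monoid_scheme \<Rightarrow> 'g set \<Rightarrow> ('g \<Rightarrow> 'g \<Rightarrow> complex) \<Rightarrow> bool" where
  "cocycle_on G S Psi \<longleftrightarrow>
     (\<forall>a\<in>S. \<forall>b\<in>S. Psi a b \<noteq> 0) \<and>
     (\<forall>a\<in>S. \<forall>b\<in>S. \<forall>c\<in>S.
        Psi a (b \<otimes>\<^bsub>G\<^esub> c) * Psi b c = Psi a b * Psi (a \<otimes>\<^bsub>G\<^esub> b) c)"

text \<open>Gauge transformation of L by (beta, gamma):
  L'^x_{g,h} = beta_{g,h} gamma^x_{gh} / (gamma^{hx}_g gamma^x_h) L^x_{g,h}.
  Here L x g h stands for L^x_{g,h} and gamma g x for gamma^x_g.\<close>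
definition gauge_transform ::
  "('g, 'm) monoid_scheme \<Rightarrow> ('g \<Rightarrow> 'x \<Rightarrow> 'x) \<Rightarrow> ('g \<Rightarrow> 'g \<Rightarrow> complex) \<Rightarrow> ('g \<Rightarrow> 'x \<Rightarrow> complex)
    \<Rightarrow> ('x \<Rightarrow> 'g \<Rightarrow> 'g \<Rightarrow> complex) \<Rightarrow> ('x \<Rightarrow> 'g \<Rightarrow> 'g \<Rightarrow> complex)" where
  "gauge_transform G act beta gamma L = (\<lambda>x g h.
     beta g h * gamma (g \<otimes>\<^bsub>G\<^esub> h) x / (gamma g (act h x) * gamma h x) * L x g h)"

definition ell :: "('g, 'm) monoid_scheme \<Rightarrow> ('x \<Rightarrow> 'g \<Rightarrow> 'g \<Rightarrow> complex) \<Rightarrow> 'x \<Rightarrow> 'g \<Rightarrow> 'g \<Rightarrow> 'g \<Rightarrow> complex" where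
  "ell G L x a b g = L x (a \<otimes>\<^bsub>G\<^esub> g) (inv\<^bsub>G\<^esub> g \<otimes>\<^bsub>G\<^esub> b) / L x a b"

definition block_independent ::
  "('g, 'm) monoid_scheme \<Rightarrow> 'x set \<Rightarrow> ('g \<Rightarrow> 'x \<Rightarrow> 'x) \<Rightarrow> ('x \<Rightarrow> 'g \<Rightarrow> 'g \<Rightarrow> complex) \<Rightarrow> bool" where
  "block_independent G X act L \<longleftrightarrow>
     (\<exists>beta gamma.
        (\<forall>g\<in>carrier G. \<forall>h\<in>carrier G. beta g h \<noteq> 0) \<and>
        (\<forall>g\<in>carrier G. \<forall>x\<in>X. gamma g x \<noteq> 0) \<and>
        (\<forall>a\<in>carrier G. \<forall>b\<in>carrier G. \<forall>g\<in>carrier G. \<forall>x\<in>X. \<forall>y\<in>X.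
           ell G (gauge_transform G act beta gamma L) x a b g
             = ell G (gauge_transform G act beta gamma L) y a b g))"

end

theory Submission
  imports Defs
begin

(* L is a 2-cocycle of the action groupoid of X, and gauge transformations change it by
   coboundaries. If psi extends to a cocycle Psi on G, then conjugating Psi by the
   representatives k_x shows that L is gauge equivalent to Psi itself, which does not depend
   on x. Conversely, if after a gauge transformation the ratios ell do not depend on x, then
   the gauged L is c_x F for a single F on G x G; at the base point F is a cocycle up to a
   character of G that is trivial on H, and removing this character and the gauge at x0 gives
   a cocycle on G restricting to psi. *)

lemma cocycle_onD:
  assumes "cocycle_on G S P"
  shows cocycle_on_nonzero: "\<And>a b. a \<in> S \<Longrightarrow> b \<in> S \<Longrightarrow> P a b \<noteq> 0"
    and cocycle_on_identity: "\<And>a b c. a \<in> S \<Longrightarrow> b \<in> S \<Longrightarrow> c \<in> S \<Longrightarrow>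
      P a (b \<otimes>\<^bsub>G\<^esub> c) * P b c = P a b * P (a \<otimes>\<^bsub>G\<^esub> b) c"
  using assms unfolding cocycle_on_def by blast+

lemma cocycle_on_mult:
  assumes "cocycle_on G S P" and "cocycle_on G S Q"
  shows "cocycle_on G S (\<lambda>a b. P a b * Q a b)"
proof -
  have "P a (b \<otimes>\<^bsub>G\<^esub> c) * Q a (b \<otimes>\<^bsub>G\<^esub> c) * (P b c * Q b c)
      = P a b * Q a b * (P (a \<otimes>\<^bsub>G\<^esub> b) c * Q (a \<otimes>\<^bsub>G\<^esub> b) c)"
    if "a \<in> S" "b \<in> S" "c \<in> S" for a b c
    using cocycle_on_identity[OF assms(1) that] cocycle_on_identity[OF assms(2) that]
    by (metis (no_types, lifting) mult.assoc mult.left_commute)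
  then show ?thesis
    using assms by (auto simp: cocycle_on_def)
qed

context group
begin

lemma cocycle_on_coboundary:
  assumes "\<And>a. a \<in> carrier G \<Longrightarrow> f a \<noteq> 0"
  shows "cocycle_on G (carrier G) (\<lambda>a b. f a * f b / f (a \<otimes> b))"
  unfolding cocycle_on_def using assms by (auto simp: m_assoc field_simps)

lemma cocycle_on_divide_character:
  assumes M_nonzero: "\<And>a b. a \<in> carrier G \<Longrightarrow> b \<in> carrier G \<Longrightarrow> M a b \<noteq> 0"
    and \<omega>_nonzero: "\<And>a. a \<in> carrier G \<Longrightarrow> \<omega> a \<noteq> 0"
    and \<omega>_mult: "\<And>a b. a \<in> carrier G \<Longrightarrow> b \<in> carrier G \<Longrightarrow> \<omega> (a \<otimes> b) = \<omega> a * \<omega> b"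
    and twisted: "\<And>a b c. a \<in> carrier G \<Longrightarrow> b \<in> carrier G \<Longrightarrow> c \<in> carrier G \<Longrightarrow>
      M a (b \<otimes> c) * M b c = M a b * \<omega> c * M (a \<otimes> b) c"
  shows "cocycle_on G (carrier G) (\<lambda>a b. M a b / \<omega> b)"
  unfolding cocycle_on_def
proof (intro conjI ballI)
  fix a b c assume abc: "a \<in> carrier G" "b \<in> carrier G" "c \<in> carrier G"
  then have "M a (b \<otimes> c) / \<omega> (b \<otimes> c) * (M b c / \<omega> c)
      = M a b * \<omega> c * M (a \<otimes> b) c / (\<omega> b * \<omega> c * \<omega> c)"
    by (simp add: twisted[symmetric] \<omega>_mult)
  also have "\<dots> = M a b / \<omega> b * (M (a \<otimes> b) c / \<omega> c)"
    using abc \<omega>_nonzero by (simp add: field_simps)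
  finally show "M a (b \<otimes> c) / \<omega> (b \<otimes> c) * (M b c / \<omega> c) = M a b / \<omega> b * (M (a \<otimes> b) c / \<omega> c)" .
qed (simp add: M_nonzero \<omega>_nonzero)

lemma cocycle_right_one:
  assumes "cocycle_on G (carrier G) P" and "a \<in> carrier G"
  shows "P a \<one> = P \<one> \<one>"
  using cocycle_on_identity[OF assms(1) assms(2) one_closed one_closed]
    cocycle_on_nonzero[OF assms(1) assms(2) one_closed] assms(2)
  by simp

lemma cocycle_mult_inv_right:
  assumes P: "cocycle_on G (carrier G) P" and a: "a \<in> carrier G" and v: "v \<in> carrier G"
  shows "P a v * P (a \<otimes> v) (inv v) = P \<one> \<one> * P v (inv v)"
  using cocycle_on_identity[OF P a v inv_closed[OF v]] cocycle_right_one[OF P a] v by simp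

text \<open>The correction factors have the shape of a gauge transformation: they depend only on
  (u, g, v), (v, h, w), (u, g h, w) and v.\<close>
lemma cocycle_conjugate:
  assumes P: "cocycle_on G (carrier G) P"
    and u: "u \<in> carrier G" and v: "v \<in> carrier G" and w: "w \<in> carrier G"
    and g: "g \<in> carrier G" and h: "h \<in> carrier G"
  shows "P (inv u \<otimes> g \<otimes> v) (inv v \<otimes> h \<otimes> w) * (P (inv u) (g \<otimes> v) * P g v)
           * (P (inv v) (h \<otimes> w) * P h w)
       = P g h * (P \<one> \<one> * P v (inv v)) * (P (inv u) (g \<otimes> h \<otimes> w) * P (g \<otimes> h) w)"
proof -
  note C = cocycle_on_identity[OF P]
  define p where "p = inv u \<otimes> g \<otimes> v"
  define u' where "u' = inv u"
  define v' where "v' = inv v"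
  have closed: "p \<in> carrier G" "u' \<in> carrier G" "v' \<in> carrier G"
    using u v g by (auto simp: p_def u'_def v'_def)
  have coc_p_v'_hw: "P p (inv v \<otimes> h \<otimes> w) * P v' (h \<otimes> w) = P p v' * P (u' \<otimes> g) (h \<otimes> w)"
  proof -
    have "inv v \<otimes> h \<otimes> w = v' \<otimes> (h \<otimes> w)" using v h w by (simp add: v'_def m_assoc)
    moreover have "p \<otimes> v' = u' \<otimes> g" using u v g by (simp add: p_def v'_def u'_def m_assoc)
    ultimately show ?thesis using C[of p v' "h \<otimes> w"] closed h w by simp
  qed
  have coc_u'_g_hw: "P u' g * P (u' \<otimes> g) (h \<otimes> w) = P u' (g \<otimes> h \<otimes> w) * P g (h \<otimes> w)"
    using C[of u' g "h \<otimes> w"] closed g h w by (simp add: m_assoc)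
  have coc_g_h_w: "P g (h \<otimes> w) * P h w = P g h * P (g \<otimes> h) w"
    using C[of g h w] g h w by simp
  have inv_v: "P (u' \<otimes> g) v * P p v' = P \<one> \<one> * P v v'"
    using cocycle_mult_inv_right[OF P, of "u' \<otimes> g" v] closed g v by (simp add: p_def u'_def v'_def)
  have coc_u'_g_v: "P u' (g \<otimes> v) * P g v = P u' g * P (u' \<otimes> g) v"
    using C[of u' g v] closed g v by simp
  have "P p (inv v \<otimes> h \<otimes> w) * (P u' (g \<otimes> v) * P g v) * (P v' (h \<otimes> w) * P h w)
      = (P p (inv v \<otimes> h \<otimes> w) * P v' (h \<otimes> w)) * (P u' (g \<otimes> v) * P g v) * P h w"
    by (simp add: ac_simps)
  also have "\<dots> = (P p v' * P (u' \<otimes> g) (h \<otimes> w)) * (P u' g * P (u' \<otimes> g) v) * P h w"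
    by (simp only: coc_p_v'_hw coc_u'_g_v)
  also have "\<dots> = (P (u' \<otimes> g) v * P p v') * (P u' g * P (u' \<otimes> g) (h \<otimes> w)) * P h w"
    by (simp add: ac_simps)
  also have "\<dots> = (P \<one> \<one> * P v v') * (P u' (g \<otimes> h \<otimes> w) * P g (h \<otimes> w)) * P h w"
    by (simp only: coc_u'_g_hw inv_v)
  also have "\<dots> = (P \<one> \<one> * P v v') * P u' (g \<otimes> h \<otimes> w) * (P g (h \<otimes> w) * P h w)"
    by (simp add: ac_simps)
  also have "\<dots> = (P \<one> \<one> * P v v') * P u' (g \<otimes> h \<otimes> w) * (P g h * P (g \<otimes> h) w)"
    by (simp only: coc_g_h_w)
  also have "\<dots> = P g h * (P \<one> \<one> * P v v') * (P u' (g \<otimes> h \<otimes> w) * P (g \<otimes> h) w)"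
    by (simp add: ac_simps)
  finally show ?thesis by (simp add: p_def u'_def v'_def)
qed

end

text \<open>The cocycle condition of the action groupoid of X: L x g h is the value on the composable
  pair of arrows (g, h x) and (h, x).\<close>
definition twisted_cocycle ::
  "('g, 'm) monoid_scheme \<Rightarrow> 'x set \<Rightarrow> ('g \<Rightarrow> 'x \<Rightarrow> 'x) \<Rightarrow> ('x \<Rightarrow> 'g \<Rightarrow> 'g \<Rightarrow> complex) \<Rightarrow> bool" where
  "twisted_cocycle G X act N \<longleftrightarrow>
     (\<forall>x\<in>X. \<forall>a\<in>carrier G. \<forall>b\<in>carrier G. N x a b \<noteq> 0) \<and>
     (\<forall>x\<in>X. \<forall>a\<in>carrier G. \<forall>b\<in>carrier G. \<forall>c\<in>carrier G.
        N x a (b \<otimes>\<^bsub>G\<^esub> c) * N x b c = N (act c x) a b * N x (a \<otimes>\<^bsub>G\<^esub> b) c)"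

lemma ell_gauge_transform:
  "ell G (gauge_transform G act \<beta> \<gamma> L) x a b g
     = \<beta> (a \<otimes>\<^bsub>G\<^esub> g) (inv\<^bsub>G\<^esub> g \<otimes>\<^bsub>G\<^esub> b) / \<beta> a b
       * ell G (gauge_transform G act (\<lambda>_ _. 1) \<gamma> L) x a b g"
  by (simp add: ell_def gauge_transform_def mult_ac)

lemma twisted_cocycleD:
  assumes "twisted_cocycle G X act N" and "x \<in> X"
  shows twisted_cocycle_nonzero: "\<And>a b. a \<in> carrier G \<Longrightarrow> b \<in> carrier G \<Longrightarrow> N x a b \<noteq> 0"
    and twisted_cocycle_identity: "\<And>a b c. a \<in> carrier G \<Longrightarrow> b \<in> carrier G \<Longrightarrow> c \<in> carrier G \<Longrightarrow>
      N x a (b \<otimes>\<^bsub>G\<^esub> c) * N x b c = N (act c x) a b * N x (a \<otimes>\<^bsub>G\<^esub> b) c"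
  using assms unfolding twisted_cocycle_def by blast+

sublocale group_action \<subseteq> group G
  using group_hom group_hom.axioms(1) by blast

context group_action
begin

lemma act_one: "x \<in> E \<Longrightarrow> \<phi> \<one> x = x"
  by (metis id_eq_one restrict_apply')

lemma act_closed: "g \<in> carrier G \<Longrightarrow> x \<in> E \<Longrightarrow> \<phi> g x \<in> E"
  using element_image by blast

lemma twisted_cocycle_gauge_transform:
  assumes L: "twisted_cocycle G E \<phi> L"
    and \<gamma>_nonzero: "\<And>g x. g \<in> carrier G \<Longrightarrow> x \<in> E \<Longrightarrow> \<gamma> g x \<noteq> 0"
  shows "twisted_cocycle G E \<phi> (gauge_transform G \<phi> (\<lambda>_ _. 1) \<gamma> L)"
  unfolding twisted_cocycle_def
proof (intro conjI ballI)
  fix x a b assume "x \<in> E" "a \<in> carrier G" "b \<in> carrier G"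
  then show "gauge_transform G \<phi> (\<lambda>_ _. 1) \<gamma> L x a b \<noteq> 0"
    by (simp add: gauge_transform_def \<gamma>_nonzero act_closed twisted_cocycle_nonzero[OF L])
next
  fix x a b c assume x: "x \<in> E" and abc: "a \<in> carrier G" "b \<in> carrier G" "c \<in> carrier G"
  let ?N = "gauge_transform G \<phi> (\<lambda>_ _. 1) \<gamma> L"
  define K where "K = \<gamma> (a \<otimes> b \<otimes> c) x / (\<gamma> a (\<phi> b (\<phi> c x)) * \<gamma> b (\<phi> c x) * \<gamma> c x)"
  have act_bc: "\<phi> (b \<otimes> c) x = \<phi> b (\<phi> c x)" and assoc: "a \<otimes> (b \<otimes> c) = a \<otimes> b \<otimes> c"
    using x abc by (simp_all add: composition_rule m_assoc)
  have nz: "\<gamma> (b \<otimes> c) x \<noteq> 0" "\<gamma> (a \<otimes> b) (\<phi> c x) \<noteq> 0"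
    using x abc by (simp_all add: \<gamma>_nonzero act_closed)
  have "?N x a (b \<otimes> c) * ?N x b c = K * (L x a (b \<otimes> c) * L x b c)"
    using nz by (simp add: gauge_transform_def K_def act_bc assoc field_simps)
  also have "\<dots> = K * (L (\<phi> c x) a b * L x (a \<otimes> b) c)"
    using twisted_cocycle_identity[OF L x abc] by simp
  also have "\<dots> = ?N (\<phi> c x) a b * ?N x (a \<otimes> b) c"
    using nz by (simp add: gauge_transform_def K_def field_simps)
  finally show "?N x a (b \<otimes> c) * ?N x b c = ?N (\<phi> c x) a b * ?N x (a \<otimes> b) c" .
qed

lemma twisted_cocycle_right_one:
  assumes N: "twisted_cocycle G E \<phi> N" and x: "x \<in> E" and a: "a \<in> carrier G"
  shows "N x a \<one> = N x \<one> \<one>"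
  using twisted_cocycle_identity[OF N x a one_closed one_closed]
    twisted_cocycle_nonzero[OF N x a one_closed] x a
  by (simp add: act_one)

lemma twisted_cocycle_left_one:
  assumes N: "twisted_cocycle G E \<phi> N" and x: "x \<in> E" and c: "c \<in> carrier G"
  shows "N x \<one> c = N (\<phi> c x) \<one> \<one>"
  using twisted_cocycle_identity[OF N x one_closed one_closed c]
    twisted_cocycle_nonzero[OF N x one_closed c] c
  by simp

text \<open>If the ratios ell do not depend on the point, then N x = c x \<cdot> F for a single F on G \<times> G,
  and the value of N at the base point is a cocycle twisted by the character N x0 \<one> _ / N x0 \<one> \<one>,
  which is trivial on the stabilizer.\<close>
lemma twisted_cocycle_restricts_to_cocycle:
  assumes N: "twisted_cocycle G E \<phi> N"
    and indep: "\<And>a b g x y. a \<in> carrier G \<Longrightarrow> b \<in> carrier G \<Longrightarrow> g \<in> carrier G \<Longrightarrow>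
      x \<in> E \<Longrightarrow> y \<in> E \<Longrightarrow> ell G N x a b g = ell G N y a b g"
    and x0: "x0 \<in> E"
  shows "\<exists>\<Phi>. cocycle_on G (carrier G) \<Phi> \<and>
           (\<forall>a\<in>stabilizer G \<phi> x0. \<forall>b\<in>stabilizer G \<phi> x0. \<Phi> a b = N x0 a b)"
proof -
  note nonzero = twisted_cocycle_nonzero[OF N]
  define \<omega> where "\<omega> c = N x0 \<one> c / N x0 \<one> \<one>" for c
  have scale: "N y a g = N x a g * N y \<one> \<one> / N x \<one> \<one>"
    if "x \<in> E" "y \<in> E" "a \<in> carrier G" "g \<in> carrier G" for x y a g
  proof -
    have "ell G N x a g g = ell G N y a g g" using indep that by blast
    then have "N x \<one> \<one> / N x a g = N y \<one> \<one> / N y a g"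
      using that
      by (simp add: ell_def twisted_cocycle_right_one[OF N, of x "a \<otimes> g"]
          twisted_cocycle_right_one[OF N, of y "a \<otimes> g"])
    moreover have "N x a g \<noteq> 0" "N y a g \<noteq> 0" "N x \<one> \<one> \<noteq> 0"
      using that by (simp_all add: nonzero)
    ultimately show ?thesis by (simp add: field_simps)
  qed
  have twisted: "N x0 a (b \<otimes> c) * N x0 b c = N x0 a b * \<omega> c * N x0 (a \<otimes> b) c"
    if abc: "a \<in> carrier G" "b \<in> carrier G" "c \<in> carrier G" for a b c
  proof -
    have "N (\<phi> c x0) a b = N x0 a b * \<omega> c"
      using scale[of x0 "\<phi> c x0" a b] abc x0
      by (simp add: \<omega>_def act_closed twisted_cocycle_left_one[OF N x0 abc(3)])
    then show ?thesis using twisted_cocycle_identity[OF N x0 abc] by simp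
  qed
  have \<omega>_nonzero: "\<omega> c \<noteq> 0" if "c \<in> carrier G" for c
    using that x0 by (simp add: \<omega>_def nonzero)
  have \<omega>_mult: "\<omega> (b \<otimes> c) = \<omega> b * \<omega> c" if "b \<in> carrier G" "c \<in> carrier G" for b c
    using twisted[of \<one> b c] that x0 nonzero[of x0 b c] nonzero[of x0 \<one> \<one>]
    by (simp add: \<omega>_def field_simps)
  have \<omega>_stabilizer: "\<omega> b = 1" if "b \<in> stabilizer G \<phi> x0" for b
    using that x0 nonzero[of x0 \<one> \<one>]
    by (simp add: \<omega>_def stabilizer_def twisted_cocycle_left_one[OF N x0, of b])
  have "cocycle_on G (carrier G) (\<lambda>a b. N x0 a b / \<omega> b)"
    using x0 by (intro cocycle_on_divide_character) (simp_all add: nonzero \<omega>_nonzero \<omega>_mult twisted)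
  then show ?thesis using \<omega>_stabilizer by auto
qed

lemma block_independent_restricts_to_cocycle:
  assumes L: "twisted_cocycle G E \<phi> L" and bi: "block_independent G E \<phi> L" and x0: "x0 \<in> E"
  shows "\<exists>\<Psi>. cocycle_on G (carrier G) \<Psi> \<and>
           (\<forall>a\<in>stabilizer G \<phi> x0. \<forall>b\<in>stabilizer G \<phi> x0. \<Psi> a b = L x0 a b)"
proof -
  obtain \<beta> \<gamma> where
    \<beta>_nonzero: "\<forall>g\<in>carrier G. \<forall>h\<in>carrier G. \<beta> g h \<noteq> 0" and
    \<gamma>_nonzero: "\<forall>g\<in>carrier G. \<forall>x\<in>E. \<gamma> g x \<noteq> 0" and
    indep: "\<forall>a\<in>carrier G. \<forall>b\<in>carrier G. \<forall>g\<in>carrier G. \<forall>x\<in>E. \<forall>y\<in>E.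
      ell G (gauge_transform G \<phi> \<beta> \<gamma> L) x a b g = ell G (gauge_transform G \<phi> \<beta> \<gamma> L) y a b g"
    using bi unfolding block_independent_def by blast
  define N where "N = gauge_transform G \<phi> (\<lambda>_ _. 1) \<gamma> L"
  have N: "twisted_cocycle G E \<phi> N"
    unfolding N_def using L \<gamma>_nonzero by (intro twisted_cocycle_gauge_transform) auto
  have "ell G N x a b g = ell G N y a b g"
    if "a \<in> carrier G" "b \<in> carrier G" "g \<in> carrier G" "x \<in> E" "y \<in> E" for a b g x y
  proof -
    have "ell G (gauge_transform G \<phi> \<beta> \<gamma> L) x a b g = ell G (gauge_transform G \<phi> \<beta> \<gamma> L) y a b g"
      using indep that by blast
    then have "\<beta> (a \<otimes> g) (inv g \<otimes> b) / \<beta> a b * ell G N x a b g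
        = \<beta> (a \<otimes> g) (inv g \<otimes> b) / \<beta> a b * ell G N y a b g"
      unfolding ell_gauge_transform[of G \<phi> \<beta>] N_def .
    moreover have "\<beta> (a \<otimes> g) (inv g \<otimes> b) / \<beta> a b \<noteq> 0"
      using that \<beta>_nonzero by simp
    ultimately show ?thesis by simp
  qed
  then obtain \<Phi> where \<Phi>: "cocycle_on G (carrier G) \<Phi>"
    and \<Phi>_stabilizer: "\<forall>a\<in>stabilizer G \<phi> x0. \<forall>b\<in>stabilizer G \<phi> x0. \<Phi> a b = N x0 a b"
    using twisted_cocycle_restricts_to_cocycle[OF N _ x0] by blast
  define \<Psi> where "\<Psi> a b = \<Phi> a b * (\<gamma> a x0 * \<gamma> b x0 / \<gamma> (a \<otimes> b) x0)" for a b
  have "cocycle_on G (carrier G) \<Psi>"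
    unfolding \<Psi>_def using \<Phi> \<gamma>_nonzero x0
    by (intro cocycle_on_mult cocycle_on_coboundary) auto
  moreover have "\<Psi> a b = L x0 a b" if "a \<in> stabilizer G \<phi> x0" "b \<in> stabilizer G \<phi> x0" for a b
    using that \<Phi>_stabilizer \<gamma>_nonzero x0
    by (simp add: \<Psi>_def N_def gauge_transform_def stabilizer_def)
  ultimately show ?thesis by blast
qed

end

locale orbit_section = group_action G X act
  for G :: "('g, 'm) monoid_scheme" (structure) and X :: "'x set" and act :: "'g \<Rightarrow> 'x \<Rightarrow> 'x" +
  fixes x0 :: 'x and k :: "'x \<Rightarrow> 'g"
  assumes base_point: "x0 \<in> X"
    and section_closed: "x \<in> X \<Longrightarrow> k x \<in> carrier G"
    and section_maps: "x \<in> X \<Longrightarrow> act (k x) x0 = x"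
    and section_base: "k x0 = \<one>"
begin

definition stab_part :: "'g \<Rightarrow> 'x \<Rightarrow> 'g" where "stab_part g x = inv (k (act g x)) \<otimes> g \<otimes> k x"

lemma stab_part_in_stabilizer:
  assumes g: "g \<in> carrier G" and x: "x \<in> X"
  shows "stab_part g x \<in> stabilizer G act x0"
proof -
  have gx: "act g x \<in> X" and kgx: "k (act g x) \<in> carrier G"
    using g x by (simp_all add: act_closed section_closed)
  have "act (stab_part g x) x0 = act (inv (k (act g x))) (act (k (act g x)) x0)"
    using g x gx kgx base_point
    by (simp add: stab_part_def composition_rule section_closed section_maps act_closed)
  also have "\<dots> = x0"
    using composition_rule[of x0 "inv (k (act g x))" "k (act g x)"] kgx base_point
    by (simp add: act_one)
  finally show ?thesis
    using g x by (simp add: stabilizer_def stab_part_def section_closed act_closed)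
qed

lemma stab_part_mult:
  assumes "g \<in> carrier G" "h \<in> carrier G" "x \<in> X"
  shows "stab_part (g \<otimes> h) x = stab_part g (act h x) \<otimes> stab_part h x"
proof -
  have k: "k (act g (act h x)) \<in> carrier G" "k (act h x) \<in> carrier G" "k x \<in> carrier G"
    using assms by (simp_all add: section_closed act_closed)
  then have "k (act h x) \<otimes> (inv (k (act h x)) \<otimes> z) = z" if "z \<in> carrier G" for z
    using that by (simp add: m_assoc[symmetric])
  then show ?thesis
    using assms k by (simp add: stab_part_def composition_rule m_assoc)
qed

lemma stab_part_base: "a \<in> stabilizer G act x0 \<Longrightarrow> stab_part a x0 = a"
  by (simp add: stab_part_def stabilizer_def section_base)

lemma induced_twisted_cocycle:
  assumes \<psi>: "cocycle_on G (stabilizer G act x0) \<psi>"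
    and L: "\<And>x g h. x \<in> X \<Longrightarrow> g \<in> carrier G \<Longrightarrow> h \<in> carrier G \<Longrightarrow>
      L x g h = \<psi> (stab_part g (act h x)) (stab_part h x)"
  shows "twisted_cocycle G X act L"
  unfolding twisted_cocycle_def
proof (intro conjI ballI)
  fix x a b assume "x \<in> X" "a \<in> carrier G" "b \<in> carrier G"
  then show "L x a b \<noteq> 0"
    by (simp add: L cocycle_on_nonzero[OF \<psi>] stab_part_in_stabilizer act_closed)
next
  fix x a b c assume x: "x \<in> X" and abc: "a \<in> carrier G" "b \<in> carrier G" "c \<in> carrier G"
  define p where "p = stab_part a (act b (act c x))"
  define q where "q = stab_part b (act c x)"
  define r where "r = stab_part c x"
  have pqr: "p \<in> stabilizer G act x0" "q \<in> stabilizer G act x0" "r \<in> stabilizer G act x0"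
    unfolding p_def q_def r_def using x abc by (simp_all add: stab_part_in_stabilizer act_closed)
  have "L x a (b \<otimes> c) = \<psi> p (q \<otimes> r)" "L x b c = \<psi> q r"
    "L (act c x) a b = \<psi> p q" "L x (a \<otimes> b) c = \<psi> (p \<otimes> q) r"
    using x abc by (simp_all add: L p_def q_def r_def composition_rule stab_part_mult act_closed)
  then show "L x a (b \<otimes> c) * L x b c = L (act c x) a b * L x (a \<otimes> b) c"
    using cocycle_on_identity[OF \<psi> pqr] by simp
qed

lemma block_independent_induced:
  assumes P: "cocycle_on G (carrier G) P"
    and P_extends: "\<forall>a\<in>stabilizer G act x0. \<forall>b\<in>stabilizer G act x0. P a b = \<psi> a b"
    and L: "\<And>x g h. x \<in> X \<Longrightarrow> g \<in> carrier G \<Longrightarrow> h \<in> carrier G \<Longrightarrow>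
      L x g h = \<psi> (stab_part g (act h x)) (stab_part h x)"
  shows "block_independent G X act L"
proof -
  note nonzero = cocycle_on_nonzero[OF P]
  define \<theta> where "\<theta> g x = P (inv (k (act g x))) (g \<otimes> k x) * P g (k x)" for g x
  define \<rho> where "\<rho> x = P \<one> \<one> * P (k x) (inv (k x))" for x
  define \<gamma> where "\<gamma> g x = \<rho> x / \<theta> g x" for g x
  have \<theta>_nonzero: "\<theta> g x \<noteq> 0" if "g \<in> carrier G" "x \<in> X" for g x
    using that by (simp add: \<theta>_def nonzero section_closed act_closed)
  have \<rho>_nonzero: "\<rho> x \<noteq> 0" if "x \<in> X" for x
    using that by (simp add: \<rho>_def nonzero section_closed)
  have gauged: "gauge_transform G act (\<lambda>_ _. 1) \<gamma> L x g h = P g h"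
    if x: "x \<in> X" and gh: "g \<in> carrier G" "h \<in> carrier G" for x g h
  proof -
    have "L x g h * \<theta> g (act h x) * \<theta> h x = P g h * \<rho> (act h x) * \<theta> (g \<otimes> h) x"
      using cocycle_conjugate[OF P, of "k (act g (act h x))" "k (act h x)" "k x" g h] x gh
        P_extends L stab_part_in_stabilizer
      by (simp add: \<theta>_def \<rho>_def stab_part_def composition_rule section_closed act_closed)
    then show ?thesis
      using x gh \<theta>_nonzero \<rho>_nonzero
      by (simp add: gauge_transform_def \<gamma>_def act_closed field_simps)
  qed
  show ?thesis
    unfolding block_independent_def
  proof (intro exI conjI ballI)
    show "(1::complex) \<noteq> 0" by simp
  next
    fix g x assume "g \<in> carrier G" "x \<in> X"
    then show "\<gamma> g x \<noteq> 0" by (simp add: \<gamma>_def \<theta>_nonzero \<rho>_nonzero)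
  next
    fix a b g x y assume "a \<in> carrier G" "b \<in> carrier G" "g \<in> carrier G" "x \<in> X" "y \<in> X"
    then show "ell G (gauge_transform G act (\<lambda>_ _. 1) \<gamma> L) x a b g
             = ell G (gauge_transform G act (\<lambda>_ _. 1) \<gamma> L) y a b g"
      by (simp add: ell_def gauged)
  qed
qed

end

theorem mainTheorem8:
  fixes G :: "('g, 'm) monoid_scheme" (structure)
    and X :: "'x set" and act :: "'g \<Rightarrow> 'x \<Rightarrow> 'x"
    and x0 :: 'x and k :: "'x \<Rightarrow> 'g" and psi :: "'g \<Rightarrow> 'g \<Rightarrow> complex"
    and L :: "'x \<Rightarrow> 'g \<Rightarrow> 'g \<Rightarrow> complex"
  assumes "group G" and "finite (carrier G)" and "finite X"
    and "transitive_action G X act"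
    and "x0 \<in> X"
    and "\<And>x. x \<in> X \<Longrightarrow> k x \<in> carrier G \<and> act (k x) x0 = x"
    and "k x0 = \<one>"
    and "\<And>a b. a \<in> stabilizer G act x0 \<Longrightarrow> b \<in> stabilizer G act x0 \<Longrightarrow> cmod (psi a b) = 1"
    and "cocycle_on G (stabilizer G act x0) psi"
    and "\<And>x g1 g2. L x g1 g2 =
           psi (inv (k (act (g1 \<otimes> g2) x)) \<otimes> g1 \<otimes> k (act g2 x))
               (inv (k (act g2 x)) \<otimes> g2 \<otimes> k x)"
  shows "block_independent G X act L \<longleftrightarrow>
         (\<exists>Psi. cocycle_on G (carrier G) Psi \<and>
            (\<forall>a\<in>stabilizer G act x0. \<forall>b\<in>stabilizer G act x0. Psi a b = psi a b))"
proof -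
  interpret orbit_section G X act x0 k
    using assms(4-7) transitive_action.axioms(1)
    by (intro orbit_section.intro orbit_section_axioms.intro) auto
  have L: "L x g h = psi (stab_part g (act h x)) (stab_part h x)"
    if "x \<in> X" "g \<in> carrier G" "h \<in> carrier G" for x g h
    using assms(10) that by (simp add: stab_part_def composition_rule)
  have L_base: "L x0 a b = psi a b" if "a \<in> stabilizer G act x0" "b \<in> stabilizer G act x0" for a b
    using that L[of x0 a b] base_point by (simp add: stabilizer_def stab_part_base)
  have L_twisted: "twisted_cocycle G X act L"
    by (rule induced_twisted_cocycle[OF assms(9) L])
  show ?thesis (is "?block_independent \<longleftrightarrow> ?extends")
  proof
    assume ?block_independent
    then show ?extends
      using block_independent_restricts_to_cocycle[OF L_twisted _ base_point] L_base by auto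
  next
    assume ?extends
    then show ?block_independent
      using block_independent_induced[where \<psi> = psi, OF _ _ L] by blast
  qed
qed

end
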